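(* Let $R$ be a commutative semiring and $v:R\to M$ a surjective m-valuation. (i) If $\varphi$ is any supervaluation covering $v$, then $\varphi(a)$ is ghost for every $a\in Y(v)$. (ii) If $Y(v)=\emptyset$, then every surjective m-supervaluation covering $v$ is a supervaluation.
   Context: A bipotent semiring $M$: commutative monoid with absorbing $0$, total order compatible with multiplication, $0$ least, $x+y=\max(x,y)$. An m-valuation: multiplicative $v:R\to M$ with $v(0)=0$, $v(1)=1$, $v(a+b)\le\max(v(a),v(b))$. A supertropical monoid is a commutative monoid $U$ with absorbing $0$, idempotent $e$ with $ex=0\Rightarrow x=0$, and a total order on $eU$ making it a bipotent semiring; elements of $eU$ are ghost. It is a semiring if the addition $x+y:=y$ ($ex<ey$), $x$ ($ex>ey$), $ex$ ($ex=ey$) is associative and distributive. An m-supervaluation is a map $\varphi:R\to U$ with $\varphi(0)=0$, $\varphi(1)=1$, multiplicative, $e\varphi(a+b)\le\max(e\varphi(a),e\varphi(b))$; it covers $v$ if $eU=M$ and $e\varphi=v$; it is surjective if $U=\varphi(R)\cup e\varphi(R)$; it is a supervaluation if $U$ is a semiring. $Y(v):=\{ab: a,b\in R,\ \exists a'\in R\text{ with } v(a')<v(a),\ v(a'b)=v(ab)\neq0\}$. *)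

theory Defs
  imports Main
begin

definition comm_monoid_abs :: "'a set \<Rightarrow> ('a \<Rightarrow> 'a \<Rightarrow> 'a) \<Rightarrow> 'a \<Rightarrow> 'a \<Rightarrow> bool" where
  "comm_monoid_abs M f u z \<longleftrightarrow>
     u \<in> M \<and> z \<in> M \<and> (\<forall>x\<in>M. \<forall>y\<in>M. f x y \<in> M) \<and>
     (\<forall>x\<in>M. \<forall>y\<in>M. \<forall>w\<in>M. f (f x y) w = f x (f y w)) \<and>
     (\<forall>x\<in>M. \<forall>y\<in>M. f x y = f y x) \<and>
     (\<forall>x\<in>M. f u x = x) \<and> (\<forall>x\<in>M. f z x = z)"

text \<open>Bipotent semiring: commutative monoid with absorbing 0, total order compatible with
  multiplication, 0 least; addition is max (determined by the order).\<close>

definition bipotent_semiring ::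
  "'a set \<Rightarrow> ('a \<Rightarrow> 'a \<Rightarrow> 'a) \<Rightarrow> 'a \<Rightarrow> 'a \<Rightarrow> ('a \<Rightarrow> 'a \<Rightarrow> bool) \<Rightarrow> bool" where
  "bipotent_semiring M f u z le \<longleftrightarrow>
     comm_monoid_abs M f u z \<and>
     (\<forall>x\<in>M. le x x) \<and>
     (\<forall>x\<in>M. \<forall>y\<in>M. le x y \<and> le y x \<longrightarrow> x = y) \<and>
     (\<forall>x\<in>M. \<forall>y\<in>M. \<forall>w\<in>M. le x y \<and> le y w \<longrightarrow> le x w) \<and>
     (\<forall>x\<in>M. \<forall>y\<in>M. le x y \<or> le y x) \<and>
     (\<forall>x\<in>M. \<forall>y\<in>M. \<forall>w\<in>M. le x y \<longrightarrow> le (f x w) (f y w)) \<and>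
     (\<forall>x\<in>M. le z x)"

definition ord_max :: "('a \<Rightarrow> 'a \<Rightarrow> bool) \<Rightarrow> 'a \<Rightarrow> 'a \<Rightarrow> 'a" where
  "ord_max le x y = (if le x y then y else x)"

definition ord_less :: "('a \<Rightarrow> 'a \<Rightarrow> bool) \<Rightarrow> 'a \<Rightarrow> 'a \<Rightarrow> bool" where
  "ord_less le x y \<longleftrightarrow> le x y \<and> x \<noteq> y"

definition supertropical_monoid ::
  "'u set \<Rightarrow> ('u \<Rightarrow> 'u \<Rightarrow> 'u) \<Rightarrow> 'u \<Rightarrow> 'u \<Rightarrow> 'u \<Rightarrow> ('u \<Rightarrow> 'u \<Rightarrow> bool) \<Rightarrow> bool" where
  "supertropical_monoid U f u z e le \<longleftrightarrow>
     comm_monoid_abs U f u z \<and> e \<in> U \<and> f e e = e \<and>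
     (\<forall>x\<in>U. f e x = z \<longrightarrow> x = z) \<and>
     bipotent_semiring (f e ` U) f e z le"

definition st_add :: "('u \<Rightarrow> 'u \<Rightarrow> 'u) \<Rightarrow> 'u \<Rightarrow> ('u \<Rightarrow> 'u \<Rightarrow> bool) \<Rightarrow> 'u \<Rightarrow> 'u \<Rightarrow> 'u" where
  "st_add f e le x y =
     (if ord_less le (f e x) (f e y) then y
      else if ord_less le (f e y) (f e x) then x
      else f e x)"

definition supertropical_semiring ::
  "'u set \<Rightarrow> ('u \<Rightarrow> 'u \<Rightarrow> 'u) \<Rightarrow> 'u \<Rightarrow> 'u \<Rightarrow> 'u \<Rightarrow> ('u \<Rightarrow> 'u \<Rightarrow> bool) \<Rightarrow> bool" where
  "supertropical_semiring U f u z e le \<longleftrightarrow>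
     supertropical_monoid U f u z e le \<and>
     (\<forall>x\<in>U. \<forall>y\<in>U. \<forall>w\<in>U.
        st_add f e le (st_add f e le x y) w = st_add f e le x (st_add f e le y w)) \<and>
     (\<forall>x\<in>U. \<forall>y\<in>U. \<forall>w\<in>U.
        f w (st_add f e le x y) = st_add f e le (f w x) (f w y))"

definition m_valuation ::
  "('r::comm_semiring_1 \<Rightarrow> 'a) \<Rightarrow> 'a set \<Rightarrow> ('a \<Rightarrow> 'a \<Rightarrow> 'a) \<Rightarrow> 'a \<Rightarrow> 'a \<Rightarrow> ('a \<Rightarrow> 'a \<Rightarrow> bool) \<Rightarrow> bool" where
  "m_valuation v M f u z le \<longleftrightarrow>
     (\<forall>a. v a \<in> M) \<and> v 0 = z \<and> v 1 = u \<and>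
     (\<forall>a b. v (a * b) = f (v a) (v b)) \<and>
     (\<forall>a b. le (v (a + b)) (ord_max le (v a) (v b)))"

definition m_supervaluation ::
  "('r::comm_semiring_1 \<Rightarrow> 'u) \<Rightarrow> 'u set \<Rightarrow> ('u \<Rightarrow> 'u \<Rightarrow> 'u) \<Rightarrow> 'u \<Rightarrow> 'u \<Rightarrow> 'u \<Rightarrow> ('u \<Rightarrow> 'u \<Rightarrow> bool) \<Rightarrow> bool" where
  "m_supervaluation \<phi> U f u z e le \<longleftrightarrow>
     (\<forall>a. \<phi> a \<in> U) \<and> \<phi> 0 = z \<and> \<phi> 1 = u \<and>
     (\<forall>a b. \<phi> (a * b) = f (\<phi> a) (\<phi> b)) \<and>
     (\<forall>a b. le (f e (\<phi> (a + b))) (ord_max le (f e (\<phi> a)) (f e (\<phi> b))))"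

definition supervaluation ::
  "('r::comm_semiring_1 \<Rightarrow> 'u) \<Rightarrow> 'u set \<Rightarrow> ('u \<Rightarrow> 'u \<Rightarrow> 'u) \<Rightarrow> 'u \<Rightarrow> 'u \<Rightarrow> 'u \<Rightarrow> ('u \<Rightarrow> 'u \<Rightarrow> bool) \<Rightarrow> bool" where
  "supervaluation \<phi> U f u z e le \<longleftrightarrow>
     m_supervaluation \<phi> U f u z e le \<and> supertropical_semiring U f u z e le"

text \<open>Covering: the ghost ideal eU is M (built in: v takes values in eU) and e\<phi> = v.\<close>

definition covers :: "('r \<Rightarrow> 'u) \<Rightarrow> ('r \<Rightarrow> 'u) \<Rightarrow> ('u \<Rightarrow> 'u \<Rightarrow> 'u) \<Rightarrow> 'u \<Rightarrow> bool" where
  "covers \<phi> v f e \<longleftrightarrow> (\<forall>a. f e (\<phi> a) = v a)"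

definition sv_surjective :: "('r \<Rightarrow> 'u) \<Rightarrow> 'u set \<Rightarrow> ('u \<Rightarrow> 'u \<Rightarrow> 'u) \<Rightarrow> 'u \<Rightarrow> bool" where
  "sv_surjective \<phi> U f e \<longleftrightarrow> U = range \<phi> \<union> (\<lambda>a. f e (\<phi> a)) ` UNIV"

definition Yset :: "('r::comm_semiring_1 \<Rightarrow> 'a) \<Rightarrow> 'a \<Rightarrow> ('a \<Rightarrow> 'a \<Rightarrow> bool) \<Rightarrow> 'r set" where
  "Yset v z le = {a * b | a b. \<exists>a'. ord_less le (v a') (v a) \<and> v (a' * b) = v (a * b) \<and> v (a * b) \<noteq> z}"

end

theory Submission
  imports Defs
begin

text \<open>The addition of a supertropical monoid \<open>U\<close> is always associative, and it is
  distributive exactly when multiplication never creates a tangible tie: whenever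
  \<open>\<nu> x < \<nu> y\<close> but \<open>\<nu> (w x) = \<nu> (w y)\<close>, the product \<open>w y\<close> must already be ghost, because
  \<open>w (x + y) = w y\<close> while \<open>w x + w y = \<nu> (w y)\<close>.
  An element \<open>a b \<in> Y(v)\<close>, witnessed by \<open>v a' < v a\<close> and \<open>v (a' b) = v (a b)\<close>, is precisely
  such a tie for \<open>x = \<phi> a'\<close>, \<open>y = \<phi> a\<close>, \<open>w = \<phi> b\<close>; this gives (i). Conversely, for a
  surjective \<open>\<phi>\<close> every tie whose product is not trivially ghost (zero, or with a ghost factor)
  has tangible factors \<open>w = \<phi> c\<close>, \<open>y = \<phi> b\<close> and so produces \<open>b c \<in> Y(v)\<close>; hence
  \<open>Y(v) = {}\<close> makes \<open>U\<close> a semiring, which is (ii).\<close>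

lemma bipotent_le_antisym:
  "bipotent_semiring G f u z le \<Longrightarrow> a \<in> G \<Longrightarrow> b \<in> G \<Longrightarrow> le a b \<Longrightarrow> le b a \<Longrightarrow> a = b"
  and bipotent_le_total: "bipotent_semiring G f u z le \<Longrightarrow> a \<in> G \<Longrightarrow> b \<in> G \<Longrightarrow> le a b \<or> le b a"
  and bipotent_le_trans: "bipotent_semiring G f u z le \<Longrightarrow> a \<in> G \<Longrightarrow> b \<in> G \<Longrightarrow> c \<in> G \<Longrightarrow>
    le a b \<Longrightarrow> le b c \<Longrightarrow> le a c"
  and bipotent_mult_le_mono: "bipotent_semiring G f u z le \<Longrightarrow> a \<in> G \<Longrightarrow> b \<in> G \<Longrightarrow> c \<in> G \<Longrightarrow>
    le a b \<Longrightarrow> le (f a c) (f b c)"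
  unfolding bipotent_semiring_def by blast+

lemma m_supervaluation_in: "m_supervaluation \<phi> U f u z e le \<Longrightarrow> \<phi> a \<in> U"
  and m_supervaluation_mult: "m_supervaluation \<phi> U f u z e le \<Longrightarrow> \<phi> (a * b) = f (\<phi> a) (\<phi> b)"
  unfolding m_supervaluation_def by blast+

lemma covers_eq: "covers \<phi> v f e \<Longrightarrow> v = (\<lambda>a. f e (\<phi> a))"
  unfolding covers_def by auto

lemma sv_surjectiveD: "sv_surjective \<phi> U f e \<Longrightarrow> x \<in> U \<Longrightarrow> \<exists>a. x = \<phi> a \<or> x = f e (\<phi> a)"
  unfolding sv_surjective_def by blast

locale supertropical =
  fixes U :: "'u set" and f :: "'u \<Rightarrow> 'u \<Rightarrow> 'u" and u z e :: 'u
    and le :: "'u \<Rightarrow> 'u \<Rightarrow> bool"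
  assumes supertropical_monoid: "supertropical_monoid U f u z e le"
begin

abbreviation \<nu> :: "'u \<Rightarrow> 'u" where "\<nu> x \<equiv> f e x"

lemma mult_closed: "x \<in> U \<Longrightarrow> y \<in> U \<Longrightarrow> f x y \<in> U"
  using supertropical_monoid unfolding supertropical_monoid_def comm_monoid_abs_def by blast

lemma mult_assoc: "x \<in> U \<Longrightarrow> y \<in> U \<Longrightarrow> w \<in> U \<Longrightarrow> f (f x y) w = f x (f y w)"
  using supertropical_monoid unfolding supertropical_monoid_def comm_monoid_abs_def by blast

lemma mult_commute: "x \<in> U \<Longrightarrow> y \<in> U \<Longrightarrow> f x y = f y x"
  using supertropical_monoid unfolding supertropical_monoid_def comm_monoid_abs_def by blast

lemma zero_mult: "x \<in> U \<Longrightarrow> f z x = z"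
  using supertropical_monoid unfolding supertropical_monoid_def comm_monoid_abs_def by blast

lemma zero_in: "z \<in> U"
  using supertropical_monoid unfolding supertropical_monoid_def comm_monoid_abs_def by blast

lemma ghost_unit_in: "e \<in> U"
  and ghost_unit_idem: "f e e = e"
  and ghost_eq_zero: "x \<in> U \<Longrightarrow> \<nu> x = z \<Longrightarrow> x = z"
  and ghost_bipotent: "bipotent_semiring (\<nu> ` U) f e z le"
  using supertropical_monoid unfolding supertropical_monoid_def by blast+

lemma ghost_le_antisym: "x \<in> U \<Longrightarrow> y \<in> U \<Longrightarrow> le (\<nu> x) (\<nu> y) \<Longrightarrow> le (\<nu> y) (\<nu> x) \<Longrightarrow> \<nu> x = \<nu> y"
  by (rule bipotent_le_antisym[OF ghost_bipotent]) auto

lemma ghost_le_total: "x \<in> U \<Longrightarrow> y \<in> U \<Longrightarrow> le (\<nu> x) (\<nu> y) \<or> le (\<nu> y) (\<nu> x)"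
  by (rule bipotent_le_total[OF ghost_bipotent]) auto

lemma ghost_le_trans:
  "x \<in> U \<Longrightarrow> y \<in> U \<Longrightarrow> w \<in> U \<Longrightarrow> le (\<nu> x) (\<nu> y) \<Longrightarrow> le (\<nu> y) (\<nu> w) \<Longrightarrow> le (\<nu> x) (\<nu> w)"
  by (rule bipotent_le_trans[OF ghost_bipotent, of _ "\<nu> y"]) auto

lemma ghost_mult_le_mono:
  "x \<in> U \<Longrightarrow> y \<in> U \<Longrightarrow> w \<in> U \<Longrightarrow> le (\<nu> x) (\<nu> y) \<Longrightarrow> le (f (\<nu> x) (\<nu> w)) (f (\<nu> y) (\<nu> w))"
  by (rule bipotent_mult_le_mono[OF ghost_bipotent]) auto

lemma nu_idem [simp]: "x \<in> U \<Longrightarrow> \<nu> (\<nu> x) = \<nu> x"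
  using mult_assoc[OF ghost_unit_in ghost_unit_in] ghost_unit_idem by simp

lemma mult_nu_right:
  assumes "w \<in> U" "x \<in> U"
  shows "f w (\<nu> x) = \<nu> (f w x)"
proof -
  have "f w (\<nu> x) = f (f w e) x"
    using assms ghost_unit_in by (simp add: mult_assoc)
  also have "\<dots> = \<nu> (f w x)"
    using assms ghost_unit_in by (simp add: mult_assoc mult_commute[of w e])
  finally show ?thesis .
qed

lemma nu_mult:
  assumes "x \<in> U" "y \<in> U"
  shows "\<nu> (f x y) = f (\<nu> x) (\<nu> y)"
proof -
  have "f (\<nu> x) (\<nu> y) = \<nu> (f x (\<nu> y))"
    using assms ghost_unit_in by (simp add: mult_assoc mult_closed)
  also have "\<dots> = \<nu> (f x y)"
    using assms by (simp add: mult_nu_right mult_closed)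
  finally show ?thesis ..
qed

lemma nu_zero [simp]: "\<nu> z = z"
  using mult_commute[OF ghost_unit_in zero_in] zero_mult[OF ghost_unit_in] by simp

lemma ghost_mult_left: "w \<in> U \<Longrightarrow> y \<in> U \<Longrightarrow> \<nu> w = w \<Longrightarrow> \<nu> (f w y) = f w y"
  using mult_assoc[OF ghost_unit_in, of w y] by simp

lemma ghost_iff: "x \<in> U \<Longrightarrow> x \<in> \<nu> ` U \<longleftrightarrow> \<nu> x = x"
  by (metis image_iff nu_idem)

lemma nu_less_trans:
  "x \<in> U \<Longrightarrow> y \<in> U \<Longrightarrow> w \<in> U \<Longrightarrow> ord_less le (\<nu> x) (\<nu> y) \<Longrightarrow> ord_less le (\<nu> y) (\<nu> w) \<Longrightarrow>
    ord_less le (\<nu> x) (\<nu> w)"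
  unfolding ord_less_def by (metis ghost_le_antisym ghost_le_trans)

lemma nu_less_asym: "x \<in> U \<Longrightarrow> y \<in> U \<Longrightarrow> ord_less le (\<nu> x) (\<nu> y) \<Longrightarrow> \<not> ord_less le (\<nu> y) (\<nu> x)"
  unfolding ord_less_def using ghost_le_antisym by blast

lemma nu_cases:
  assumes "x \<in> U" "y \<in> U"
  obtains "ord_less le (\<nu> x) (\<nu> y)" | "ord_less le (\<nu> y) (\<nu> x)" | "\<nu> x = \<nu> y"
  using ghost_le_total[OF assms] that unfolding ord_less_def by metis

lemma st_add_commute:
  assumes "x \<in> U" "y \<in> U"
  shows "st_add f e le x y = st_add f e le y x"
  using assms by (cases rule: nu_cases[OF assms]) (auto simp: st_add_def dest: nu_less_asym)

lemma st_add_less: "ord_less le (\<nu> x) (\<nu> y) \<Longrightarrow> st_add f e le x y = y"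
  unfolding st_add_def by simp

lemma st_add_greater: "x \<in> U \<Longrightarrow> y \<in> U \<Longrightarrow> ord_less le (\<nu> y) (\<nu> x) \<Longrightarrow> st_add f e le x y = x"
  using nu_less_asym[of y x] by (simp add: st_add_def)

lemma st_add_tie: "\<nu> x = \<nu> y \<Longrightarrow> st_add f e le x y = \<nu> x"
  unfolding st_add_def ord_less_def by simp

lemma st_add_assoc:
  assumes x: "x \<in> U" and y: "y \<in> U" and w: "w \<in> U"
  shows "st_add f e le (st_add f e le x y) w = st_add f e le x (st_add f e le y w)"
proof (cases rule: nu_cases[OF x y])
  case xy: 1
  show ?thesis
  proof (cases rule: nu_cases[OF y w])
    case 1
    with xy show ?thesis by (simp add: st_add_less nu_less_trans[OF x y w])
  next
    case 2
    with xy show ?thesis by (simp add: st_add_less st_add_greater y w)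
  next
    case 3
    with xy show ?thesis by (simp add: st_add_less st_add_tie w)
  qed
next
  case xy: 2
  show ?thesis
  proof (cases rule: nu_cases[OF y w])
    case 1
    with xy show ?thesis by (simp add: st_add_less st_add_greater x y)
  next
    case 2
    with xy show ?thesis by (simp add: st_add_greater nu_less_trans[OF w y x] x y w)
  next
    case 3
    with xy show ?thesis by (simp add: st_add_greater st_add_tie x y w mult_closed ghost_unit_in)
  qed
next
  case xy: 3
  show ?thesis
  proof (cases rule: nu_cases[OF y w])
    case 1
    with xy show ?thesis by (simp add: st_add_less st_add_tie y)
  next
    case 2
    with xy show ?thesis by (simp add: st_add_greater st_add_tie x y w mult_closed ghost_unit_in)
  next
    case 3
    with xy show ?thesis by (simp add: st_add_tie x y w)
  qed
qed

lemma nu_mult_le_mono: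
  assumes "x \<in> U" "y \<in> U" "w \<in> U" "le (\<nu> x) (\<nu> y)"
  shows "le (\<nu> (f w x)) (\<nu> (f w y))"
  using ghost_mult_le_mono[OF assms] assms by (simp add: nu_mult mult_commute mult_closed ghost_unit_in)

context
  assumes ties: "\<And>x y w. x \<in> U \<Longrightarrow> y \<in> U \<Longrightarrow> w \<in> U \<Longrightarrow> ord_less le (\<nu> x) (\<nu> y) \<Longrightarrow>
      \<nu> (f w x) = \<nu> (f w y) \<Longrightarrow> \<nu> (f w y) = f w y"
begin

lemma st_add_distrib_ordered:
  assumes x: "x \<in> U" and y: "y \<in> U" and w: "w \<in> U" and yx: "\<not> ord_less le (\<nu> y) (\<nu> x)"
  shows "f w (st_add f e le x y) = st_add f e le (f w x) (f w y)"
proof (cases rule: nu_cases[OF x y])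
  case xy: 1
  have "le (\<nu> (f w x)) (\<nu> (f w y))"
    using nu_mult_le_mono x y w xy unfolding ord_less_def by blast
  then consider "ord_less le (\<nu> (f w x)) (\<nu> (f w y))" | "\<nu> (f w x) = \<nu> (f w y)"
    unfolding ord_less_def by blast
  then show ?thesis
  proof cases
    case 1
    with xy show ?thesis by (simp add: st_add_less)
  next
    case tie: 2
    with xy show ?thesis
      using ties[OF x y w xy tie] by (simp add: st_add_less st_add_tie)
  qed
next
  case 2
  with yx show ?thesis by blast
next
  case 3
  moreover have "\<nu> (f w x) = \<nu> (f w y)"
    using 3 x y w by (simp add: nu_mult)
  ultimately show ?thesis
    using x y w by (simp add: st_add_tie mult_nu_right)
qed

lemma st_add_distrib_if_ties_ghost:
  assumes x: "x \<in> U" and y: "y \<in> U" and w: "w \<in> U"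
  shows "f w (st_add f e le x y) = st_add f e le (f w x) (f w y)"
proof (cases "ord_less le (\<nu> y) (\<nu> x)")
  case True
  then have "\<not> ord_less le (\<nu> x) (\<nu> y)"
    using nu_less_asym x y by blast
  have "f w (st_add f e le x y) = f w (st_add f e le y x)"
    using st_add_commute[OF x y] by (rule arg_cong)
  also have "\<dots> = st_add f e le (f w y) (f w x)"
    using st_add_distrib_ordered[OF y x w] \<open>\<not> ord_less le (\<nu> x) (\<nu> y)\<close> by blast
  also have "\<dots> = st_add f e le (f w x) (f w y)"
    using x y w by (intro st_add_commute mult_closed)
  finally show ?thesis .
next
  case False
  then show ?thesis
    using st_add_distrib_ordered[OF x y w] by blast
qed

end

lemma supertropical_semiring_iff_ties_ghost:
  "supertropical_semiring U f u z e le \<longleftrightarrow>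
     (\<forall>x\<in>U. \<forall>y\<in>U. \<forall>w\<in>U. ord_less le (\<nu> x) (\<nu> y) \<and> \<nu> (f w x) = \<nu> (f w y) \<longrightarrow> \<nu> (f w y) = f w y)"
proof
  assume "supertropical_semiring U f u z e le"
  then have distrib: "\<And>x y w. x \<in> U \<Longrightarrow> y \<in> U \<Longrightarrow> w \<in> U \<Longrightarrow>
      f w (st_add f e le x y) = st_add f e le (f w x) (f w y)"
    unfolding supertropical_semiring_def by blast
  show "\<forall>x\<in>U. \<forall>y\<in>U. \<forall>w\<in>U. ord_less le (\<nu> x) (\<nu> y) \<and> \<nu> (f w x) = \<nu> (f w y) \<longrightarrow> \<nu> (f w y) = f w y"
  proof (intro ballI impI)
    fix x y w assume "x \<in> U" "y \<in> U" "w \<in> U" and tie: "ord_less le (\<nu> x) (\<nu> y) \<and> \<nu> (f w x) = \<nu> (f w y)"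
    then have "f w y = f w (st_add f e le x y)"
      by (simp add: st_add_less)
    also have "\<dots> = st_add f e le (f w x) (f w y)"
      using distrib \<open>x \<in> U\<close> \<open>y \<in> U\<close> \<open>w \<in> U\<close> by blast
    also have "\<dots> = \<nu> (f w y)"
      using tie by (simp add: st_add_tie)
    finally show "\<nu> (f w y) = f w y" by (rule sym)
  qed
next
  assume ties: "\<forall>x\<in>U. \<forall>y\<in>U. \<forall>w\<in>U. ord_less le (\<nu> x) (\<nu> y) \<and> \<nu> (f w x) = \<nu> (f w y) \<longrightarrow> \<nu> (f w y) = f w y"
  have "f w (st_add f e le x y) = st_add f e le (f w x) (f w y)"
    if "x \<in> U" "y \<in> U" "w \<in> U" for x y w
    using that by (intro st_add_distrib_if_ties_ghost) (use ties in auto)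
  then show "supertropical_semiring U f u z e le"
    unfolding supertropical_semiring_def using supertropical_monoid st_add_assoc by simp
qed

lemma supervaluation_ghost_on_Yset:
  assumes sv: "supervaluation \<phi> U f u z e le" and cov: "covers \<phi> v f e"
    and t: "t \<in> Yset v z le"
  shows "\<phi> t \<in> \<nu> ` U"
proof -
  obtain a b a' where t_eq: "t = a * b" and lt: "ord_less le (v a') (v a)"
    and tie: "v (a' * b) = v (a * b)"
    using t unfolding Yset_def by blast
  have msv: "m_supervaluation \<phi> U f u z e le"
    and semiring: "supertropical_semiring U f u z e le"
    using sv unfolding supervaluation_def by blast+
  note \<phi>_in = m_supervaluation_in[OF msv] and \<phi>_mult = m_supervaluation_mult[OF msv]
  have v_eq: "v = (\<lambda>a. \<nu> (\<phi> a))"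
    using cov by (rule covers_eq)
  have "\<nu> (f (\<phi> b) (\<phi> a')) = \<nu> (f (\<phi> b) (\<phi> a))"
    using tie \<phi>_mult[of b a'] \<phi>_mult[of b a] by (simp add: v_eq mult.commute)
  moreover have "ord_less le (\<nu> (\<phi> a')) (\<nu> (\<phi> a))"
    using lt by (simp add: v_eq)
  ultimately have "\<nu> (f (\<phi> b) (\<phi> a)) = f (\<phi> b) (\<phi> a)"
    using semiring \<phi>_in unfolding supertropical_semiring_iff_ties_ghost by blast
  then have "\<nu> (\<phi> t) = \<phi> t"
    using \<phi>_mult[of b a] t_eq by (simp add: mult.commute)
  then show ?thesis
    using ghost_iff \<phi>_in by blast
qed

lemma surjective_m_supervaluation_is_supervaluation:
  assumes Y: "Yset v z le = {}" and msv: "m_supervaluation \<phi> U f u z e le"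
    and surj: "sv_surjective \<phi> U f e" and cov: "covers \<phi> v f e"
  shows "supervaluation \<phi> U f u z e le"
proof -
  note \<phi>_in = m_supervaluation_in[OF msv] and \<phi>_mult = m_supervaluation_mult[OF msv]
  have v_eq: "v = (\<lambda>a. \<nu> (\<phi> a))"
    using cov by (rule covers_eq)
  have "\<nu> (f w y) = f w y"
    if x: "x \<in> U" and y: "y \<in> U" and w: "w \<in> U"
      and lt: "ord_less le (\<nu> x) (\<nu> y)" and tie: "\<nu> (f w x) = \<nu> (f w y)" for x y w
  proof (cases "\<nu> (f w y) = z")
    case True
    then show ?thesis
      using ghost_eq_zero[OF mult_closed[OF w y]] by simp
  next
    case nonzero: False
    obtain a' where x_val: "\<nu> x = \<nu> (\<phi> a')"
      using sv_surjectiveD[OF surj x] \<phi>_in by auto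
    consider "\<nu> w = w" | "\<nu> y = y" | c b where "w = \<phi> c" "y = \<phi> b"
      using sv_surjectiveD[OF surj w] sv_surjectiveD[OF surj y] \<phi>_in by auto
    then show ?thesis
    proof cases
      case 1
      then show ?thesis using ghost_mult_left w y by blast
    next
      case 2
      then show ?thesis using mult_nu_right[OF w y] by simp
    next
      case (3 c b)
      have "v (a' * c) = f (\<nu> x) (\<nu> w)"
        using x_val \<phi>_in \<phi>_mult[of a' c] \<open>w = \<phi> c\<close> by (simp add: v_eq nu_mult)
      also have "\<dots> = \<nu> (f w x)"
        using nu_mult[OF x w] mult_commute[OF x w] by simp
      also have "\<dots> = \<nu> (f w y)"
        by (rule tie)
      also have "\<dots> = v (b * c)"
        using \<phi>_in \<phi>_mult[of b c] \<open>w = \<phi> c\<close> \<open>y = \<phi> b\<close> by (simp add: v_eq mult_commute)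
      finally have "v (a' * c) = v (b * c)" .
      moreover have "ord_less le (v a') (v b)"
        using lt x_val \<open>y = \<phi> b\<close> by (simp add: v_eq)
      moreover have "v (b * c) \<noteq> z"
        using nonzero \<phi>_mult[of b c] \<open>w = \<phi> c\<close> \<open>y = \<phi> b\<close> \<phi>_in
        by (simp add: v_eq mult_commute)
      ultimately have "b * c \<in> Yset v z le"
        unfolding Yset_def by blast
      with Y show ?thesis by blast
    qed
  qed
  then have "supertropical_semiring U f u z e le"
    unfolding supertropical_semiring_iff_ties_ghost by blast
  with msv show ?thesis
    unfolding supervaluation_def by blast
qed

end

theorem theorem6p12:
  fixes v :: "'r::comm_semiring_1 \<Rightarrow> 'u"
    and U :: "'u set" and f :: "'u \<Rightarrow> 'u \<Rightarrow> 'u" and u z e :: 'u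
    and le :: "'u \<Rightarrow> 'u \<Rightarrow> bool"
  assumes "supertropical_monoid U f u z e le"
    and "m_valuation v (f e ` U) f e z le"
    and "range v = f e ` U"
  shows "(\<forall>\<phi>. supervaluation \<phi> U f u z e le \<and> covers \<phi> v f e \<longrightarrow>
              (\<forall>a\<in>Yset v z le. \<phi> a \<in> f e ` U))
       \<and> (Yset v z le = {} \<longrightarrow>
           (\<forall>\<phi>. m_supervaluation \<phi> U f u z e le \<and> sv_surjective \<phi> U f e \<and> covers \<phi> v f e
              \<longrightarrow> supervaluation \<phi> U f u z e le))"
proof -
  interpret supertropical U f u z e le
    using assms(1) by unfold_locales
  show ?thesis
    using supervaluation_ghost_on_Yset surjective_m_supervaluation_is_supervaluation by blast
qed

end
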